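(* Let $\mathcal{P}$ be a poset with at least two elements that has the Unique Cover Twin Property. Then for every $n\ge 2$, $\lceil\log_2 n\rceil\le \mathrm{isat}(n,\mathcal{P})$.
   Context: In a poset $(P,\le)$, $y$ covers $x$ if $x<y$ and there is no $z$ with $x<z<y$. A poset $\mathcal{P}=(P,\le)$ has the Unique Cover Twin Property (UCTP) if for every $S\in P$ that has exactly one cover $T\in P$, there exists $S'\in P$ with $S'\ne S$ such that $T$ also covers $S'$. $\mathcal{B}_n$ denotes the Boolean lattice $(2^{[n]},\subseteq)$. A family $\mathcal{F}\subseteq 2^{[n]}$ (ordered by inclusion) is induced-$\mathcal{P}$-saturated if it contains no induced copy of $\mathcal{P}$ (an injection $f$ with $u\le v\iff f(u)\subseteq f(v)$) but every family $\mathcal{F}'$ with $\mathcal{F}\subsetneq\mathcal{F}'\subseteq 2^{[n]}$ contains one. $\mathrm{isat}(n,\mathcal{P})$ is the minimum size of an induced-$\mathcal{P}$-saturated family in $\mathcal{B}_n$ (equal to $2^n$ if $\mathcal{P}$ is not an induced subposet of $\mathcal{B}_n$). *)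

theory Defs
  imports Complex_Main
begin

definition covers :: "'a set \<Rightarrow> 'a rel \<Rightarrow> 'a \<Rightarrow> 'a \<Rightarrow> bool" where
  "covers P r y x \<longleftrightarrow> x \<in> P \<and> y \<in> P \<and> (x, y) \<in> r \<and> x \<noteq> y \<and>
     \<not> (\<exists>z\<in>P. (x, z) \<in> r \<and> z \<noteq> x \<and> (z, y) \<in> r \<and> z \<noteq> y)"

definition UCTP :: "'a set \<Rightarrow> 'a rel \<Rightarrow> bool" where
  "UCTP P r \<longleftrightarrow> (\<forall>S\<in>P. \<forall>T\<in>P.
     (covers P r T S \<and> (\<forall>T'\<in>P. covers P r T' S \<longrightarrow> T' = T)) \<longrightarrow>
     (\<exists>S'\<in>P. S' \<noteq> S \<and> covers P r T S'))"

definition induced_copy :: "'a set \<Rightarrow> 'a rel \<Rightarrow> 'b set set \<Rightarrow> bool" where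
  "induced_copy P r F \<longleftrightarrow> (\<exists>f. inj_on f P \<and> f ` P \<subseteq> F \<and>
     (\<forall>u\<in>P. \<forall>v\<in>P. (u, v) \<in> r \<longleftrightarrow> f u \<subseteq> f v))"

definition induced_sat :: "nat \<Rightarrow> 'a set \<Rightarrow> 'a rel \<Rightarrow> nat set set \<Rightarrow> bool" where
  "induced_sat n P r F \<longleftrightarrow> F \<subseteq> Pow {1..n} \<and> \<not> induced_copy P r F \<and>
     (\<forall>F'. F \<subset> F' \<and> F' \<subseteq> Pow {1..n} \<longrightarrow> induced_copy P r F')"

text \<open>isat: minimum size of an induced-saturated family. If P does not embed in B_n,
  the only saturated family is 2^[n] itself, giving the convention isat = 2^n.\<close>
definition isat :: "nat \<Rightarrow> 'a set \<Rightarrow> 'a rel \<Rightarrow> nat" where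
  "isat n P r = (LEAST k. \<exists>F. induced_sat n P r F \<and> card F = k)"

end

theory Submission
  imports Defs
begin

text \<open>If an induced-saturated family F has fewer than log n members, the traces of two
  coordinates i \<noteq> j on F coincide. Then one finds a set X \<notin> F and a set A \<in> F, comparable
  with each other, that relate in the same way to every other member of F (remove j from a
  minimal member containing i, or add i to a maximal member). By saturation F \<union> {X} contains an
  induced copy of the poset. If the copy avoids A, replacing X by A gives a copy in F. If it
  uses both, the two elements are a cover pair S < T in which T is the unique cover of S, and
  the twin S' supplied by the Unique Cover Twin Property would have to lie below S,
  contradicting that T covers S'.\<close>

definition order_embedding :: "'a set \<Rightarrow> 'a rel \<Rightarrow> ('a \<Rightarrow> 'b set) \<Rightarrow> bool" where
  "order_embedding P r f \<longleftrightarrow> inj_on f P \<and> (\<forall>u\<in>P. \<forall>v\<in>P. (u, v) \<in> r \<longleftrightarrow> f u \<subseteq> f v)"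

lemma induced_copy_iff_order_embedding:
  "induced_copy P r F \<longleftrightarrow> (\<exists>f. order_embedding P r f \<and> f ` P \<subseteq> F)"
  unfolding induced_copy_def order_embedding_def by blast

definition twin_wrt :: "'b set set \<Rightarrow> 'b set \<Rightarrow> 'b set \<Rightarrow> bool" where
  "twin_wrt F X A \<longleftrightarrow> (\<forall>B\<in>F - {A}. (B \<subseteq> X \<longleftrightarrow> B \<subseteq> A) \<and> (X \<subseteq> B \<longleftrightarrow> A \<subseteq> B))"

lemma order_embedding_update_twin:
  assumes emb: "order_embedding P r f" and "p \<in> P" and A: "A \<notin> f ` P"
    and twin: "\<And>z. z \<in> P \<Longrightarrow> z \<noteq> p \<Longrightarrow> (f z \<subseteq> f p \<longleftrightarrow> f z \<subseteq> A) \<and> (f p \<subseteq> f z \<longleftrightarrow> A \<subseteq> f z)"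
  shows "order_embedding P r (f(p := A))"
proof -
  have inj: "inj_on f P" and rel: "\<And>u v. u \<in> P \<Longrightarrow> v \<in> P \<Longrightarrow> (u, v) \<in> r \<longleftrightarrow> f u \<subseteq> f v"
    using emb unfolding order_embedding_def by auto
  have "inj_on (f(p := A)) P" using inj A by (rule inj_on_fun_updI)
  moreover have "(u, v) \<in> r \<longleftrightarrow> (f(p := A)) u \<subseteq> (f(p := A)) v" if "u \<in> P" "v \<in> P" for u v
    using rel[OF that] twin[of u] twin[of v] that by (cases "u = p"; cases "v = p") auto
  ultimately show ?thesis unfolding order_embedding_def by blast
qed

lemma UCTP_comparable_twins_absurd:
  assumes U: "UCTP P r" and emb: "order_embedding P r f"
    and st: "s \<in> P" "t \<in> P" "f s \<subset> f t"
    and twin: "\<And>z. z \<in> P \<Longrightarrow> z \<noteq> s \<Longrightarrow> z \<noteq> t \<Longrightarrow>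
      (f z \<subseteq> f s \<longleftrightarrow> f z \<subseteq> f t) \<and> (f s \<subseteq> f z \<longleftrightarrow> f t \<subseteq> f z)"
  shows False
proof -
  have inj: "inj_on f P" and rel: "\<And>u v. u \<in> P \<Longrightarrow> v \<in> P \<Longrightarrow> (u, v) \<in> r \<longleftrightarrow> f u \<subseteq> f v"
    using emb unfolding order_embedding_def by auto
  have "s \<noteq> t" and st_r: "(s, t) \<in> r" using st rel by auto
  have cover: "covers P r t s"
  proof -
    have "f z = f t" if "z \<in> P" "(s, z) \<in> r" "z \<noteq> s" "(z, t) \<in> r" "z \<noteq> t" for z
      using that rel[of s z] rel[of z t] twin[of z] st by auto
    then have "\<not> (\<exists>z\<in>P. (s, z) \<in> r \<and> z \<noteq> s \<and> (z, t) \<in> r \<and> z \<noteq> t)"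
      using inj st by (metis inj_on_def)
    then show ?thesis unfolding covers_def using st \<open>s \<noteq> t\<close> st_r by blast
  qed
  have unique: "T' = t" if "T' \<in> P" "covers P r T' s" for T'
  proof (rule ccontr)
    assume "T' \<noteq> t"
    have "(s, T') \<in> r" "T' \<noteq> s" using that unfolding covers_def by auto
    then have "(t, T') \<in> r" using rel twin[of T'] that st \<open>T' \<noteq> t\<close> by auto
    then show False using that st \<open>s \<noteq> t\<close> st_r \<open>T' \<noteq> t\<close> unfolding covers_def by blast
  qed
  obtain S' where S': "S' \<in> P" "S' \<noteq> s" "covers P r t S'"
    using U st cover unique unfolding UCTP_def by blast
  then have "(S', t) \<in> r" "S' \<noteq> t" unfolding covers_def by auto
  then have "(S', s) \<in> r" using rel twin[of S'] S' st by auto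
  then show False using S' st \<open>s \<noteq> t\<close> st_r unfolding covers_def by blast
qed

lemma induced_copy_insert_twin:
  assumes U: "UCTP P r" and "X \<notin> F" "A \<in> F" and comparable: "X \<subset> A \<or> A \<subset> X"
    and twin: "twin_wrt F X A" and copy: "induced_copy P r (insert X F)"
  shows "induced_copy P r F"
proof -
  obtain f where emb: "order_embedding P r f" and img: "f ` P \<subseteq> insert X F"
    using copy unfolding induced_copy_iff_order_embedding by blast
  have inj: "inj_on f P" using emb unfolding order_embedding_def by blast
  show ?thesis
  proof (cases "X \<in> f ` P")
    case False
    then show ?thesis using emb img unfolding induced_copy_iff_order_embedding by blast
  next
    case True
    then obtain p where p: "p \<in> P" "f p = X" by blast
    have in_F: "f z \<in> F" if "z \<in> P" "z \<noteq> p" for z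
    proof -
      have "f z \<noteq> X" using inj p that by (metis inj_on_def)
      then show ?thesis using img that by blast
    qed
    show ?thesis
    proof (cases "A \<in> f ` P")
      case False
      have "f z \<in> F - {A}" if "z \<in> P" "z \<noteq> p" for z
        using in_F[OF that] False that by blast
      then have "order_embedding P r (f(p := A))"
        using twin p False unfolding twin_wrt_def by (intro order_embedding_update_twin[OF emb]) auto
      moreover have "(f(p := A)) ` P \<subseteq> F"
        using in_F \<open>A \<in> F\<close> by auto
      ultimately show ?thesis unfolding induced_copy_iff_order_embedding by blast
    next
      case True
      then obtain q where q: "q \<in> P" "f q = A" by blast
      have "(f z \<subseteq> f p \<longleftrightarrow> f z \<subseteq> f q) \<and> (f p \<subseteq> f z \<longleftrightarrow> f q \<subseteq> f z)"
        if "z \<in> P" "z \<noteq> p" "z \<noteq> q" for z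
      proof -
        have "f z \<noteq> A" using inj q that by (metis inj_on_def)
        then show ?thesis using twin in_F[OF that(1,2)] p q unfolding twin_wrt_def by blast
      qed
      then show ?thesis
        using comparable p q UCTP_comparable_twins_absurd[OF U emb, of p q]
          UCTP_comparable_twins_absurd[OF U emb, of q p] by blast
    qed
  qed
qed

lemma exists_inseparable_coordinates:
  fixes n :: nat
  assumes "finite F" and "2 ^ card F < n"
  obtains i j where "i \<in> {1..n}" "j \<in> {1..n}" "i \<noteq> j" "\<forall>A\<in>F. i \<in> A \<longleftrightarrow> j \<in> A"
proof -
  define trace where "trace i = {A\<in>F. i \<in> A}" for i
  have "\<not> inj_on trace {1..n}"
  proof
    assume "inj_on trace {1..n}"
    moreover have "trace ` {1..n} \<subseteq> Pow F" by (auto simp: trace_def)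
    ultimately have "card {1..n} \<le> card (Pow F)" using assms(1) by (intro card_inj_on_le) auto
    then show False using assms by (simp add: card_Pow)
  qed
  then obtain i j where "i \<in> {1..n}" "j \<in> {1..n}" "i \<noteq> j" "trace i = trace j"
    unfolding inj_on_def by blast
  moreover have "i \<in> A \<longleftrightarrow> j \<in> A" if "A \<in> F" for A
    using \<open>trace i = trace j\<close> that unfolding trace_def by blast
  ultimately show ?thesis by (intro that) auto
qed

lemma twin_below_minimal:
  assumes "A \<in> F" "i \<in> A" and minimal: "\<forall>B\<in>F. i \<in> B \<longrightarrow> B \<subseteq> A \<longrightarrow> A = B"
    and "i \<noteq> j" and insep: "\<forall>B\<in>F. i \<in> B \<longleftrightarrow> j \<in> B"
  shows "A - {j} \<notin> F" "A - {j} \<subset> A" "twin_wrt F (A - {j}) A"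
proof -
  have "i \<in> A - {j}" "j \<notin> A - {j}" using assms(2,4) by auto
  then show "A - {j} \<notin> F" using insep by metis
  have "j \<in> A" using insep assms(1,2) by simp
  then show "A - {j} \<subset> A" by auto
  show "twin_wrt F (A - {j}) A"
    unfolding twin_wrt_def
  proof (intro ballI conjI iffI)
    fix B assume B: "B \<in> F - {A}"
    then have "B \<in> F" "B \<noteq> A" by auto
    show "B \<subseteq> A - {j}" if "B \<subseteq> A"
    proof -
      have "i \<notin> B" using minimal \<open>B \<in> F\<close> \<open>B \<noteq> A\<close> that by metis
      then have "j \<notin> B" using insep \<open>B \<in> F\<close> by simp
      then show ?thesis using that by auto
    qed
    show "A \<subseteq> B" if "A - {j} \<subseteq> B"
    proof -
      have "i \<in> B" using that \<open>i \<in> A - {j}\<close> by auto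
      then have "j \<in> B" using insep \<open>B \<in> F\<close> by simp
      then show ?thesis using that by auto
    qed
  qed auto
qed

lemma twin_above_maximal:
  assumes "A \<in> F" and maximal: "\<forall>B\<in>F. A \<subseteq> B \<longrightarrow> A = B" and avoid: "\<forall>B\<in>F. i \<notin> B"
  shows "insert i A \<notin> F" "A \<subset> insert i A" "twin_wrt F (insert i A) A"
proof -
  show "insert i A \<notin> F" using avoid by auto
  have "i \<notin> A" using avoid assms(1) by simp
  then show "A \<subset> insert i A" by auto
  show "twin_wrt F (insert i A) A"
    unfolding twin_wrt_def
  proof (intro ballI conjI iffI)
    fix B assume B: "B \<in> F - {A}"
    then have "B \<in> F" "B \<noteq> A" by auto
    show "B \<subseteq> A" if "B \<subseteq> insert i A"
      using that avoid \<open>B \<in> F\<close> by auto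
    show "insert i A \<subseteq> B" if "A \<subseteq> B"
      using that maximal \<open>B \<in> F\<close> \<open>B \<noteq> A\<close> by auto
  qed auto
qed

lemma exists_twin_outside:
  assumes "finite F" "F \<noteq> {}" "F \<subseteq> Pow {1..n}"
    and ij: "i \<in> {1..n}" "i \<noteq> j" and insep: "\<forall>A\<in>F. i \<in> A \<longleftrightarrow> j \<in> A"
  obtains X A where "X \<notin> F" "X \<subseteq> {1..n}" "A \<in> F" "X \<subset> A \<or> A \<subset> X" "twin_wrt F X A"
proof (cases "\<exists>A\<in>F. i \<in> A")
  case True
  then obtain A0 where A0: "A0 \<in> {B\<in>F. i \<in> B}" by blast
  have "finite {B\<in>F. i \<in> B}" using \<open>finite F\<close> by simp
  then obtain A where A: "A \<in> {B\<in>F. i \<in> B}"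
    and minimal: "\<forall>B\<in>{B\<in>F. i \<in> B}. B \<subseteq> A \<longrightarrow> A = B"
    using finite_has_minimal2[OF _ A0] by blast
  have "A \<in> F" "i \<in> A" using A by auto
  note twin = twin_below_minimal[OF this _ ij(2) insep]
  have "A - {j} \<subseteq> {1..n}" using \<open>A \<in> F\<close> assms(3) by blast
  with twin show ?thesis using minimal \<open>A \<in> F\<close> by (intro that) auto
next
  case False
  obtain A where "A \<in> F" and maximal: "\<forall>B\<in>F. A \<subseteq> B \<longrightarrow> A = B"
    using finite_has_maximal[OF assms(1,2)] by blast
  note twin = twin_above_maximal[OF this]
  have "insert i A \<subseteq> {1..n}" using \<open>A \<in> F\<close> assms(3) ij by blast
  with twin show ?thesis using False \<open>A \<in> F\<close> by (intro that) auto
qed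

lemma induced_sat_nonempty:
  assumes P2: "2 \<le> card P \<or> infinite P" and sat: "induced_sat n P r F"
  shows "F \<noteq> {}"
proof
  assume "F = {}"
  then have "F \<subset> {{}}" "{{}} \<subseteq> Pow {1..n}" by auto
  then have "induced_copy P r {{}::nat set}"
    using sat unfolding induced_sat_def by blast
  then obtain f where f: "inj_on f P" "f ` P \<subseteq> {{}::nat set}"
    unfolding induced_copy_def by blast
  then have "finite P" using inj_on_finite by blast
  moreover have "card P \<le> card {{}::nat set}" by (rule card_inj_on_le[OF f]) simp
  ultimately show False using P2 by simp
qed

lemma induced_sat_exists:
  assumes "P \<noteq> {}"
  obtains F where "induced_sat n P r F"
proof -
  define S where "S = {G. G \<subseteq> Pow {1..n} \<and> \<not> induced_copy P r G}"
  have "finite S" unfolding S_def by (rule finite_subset[of _ "Pow (Pow {1..n})"]) auto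
  moreover have "{} \<in> S" using assms unfolding S_def induced_copy_def by auto
  ultimately obtain F where "F \<in> S" and maximal: "\<forall>G\<in>S. F \<subseteq> G \<longrightarrow> F = G"
    using finite_has_maximal by blast
  then have "induced_sat n P r F" unfolding induced_sat_def S_def by blast
  then show ?thesis by (rule that)
qed

lemma induced_sat_card_bound:
  assumes U: "UCTP P r" and P2: "2 \<le> card P \<or> infinite P" and sat: "induced_sat n P r F"
  shows "n \<le> 2 ^ card F"
proof (rule ccontr)
  assume "\<not> n \<le> 2 ^ card F"
  then have small: "2 ^ card F < n" by simp
  have F: "F \<subseteq> Pow {1..n}" "\<not> induced_copy P r F"
    and saturated: "\<And>F'. F \<subset> F' \<Longrightarrow> F' \<subseteq> Pow {1..n} \<Longrightarrow> induced_copy P r F'"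
    using sat unfolding induced_sat_def by auto
  have "finite F" using F(1) by (rule finite_subset) simp
  then obtain i j where "i \<in> {1..n}" "j \<in> {1..n}" "i \<noteq> j" "\<forall>A\<in>F. i \<in> A \<longleftrightarrow> j \<in> A"
    using small by (rule exists_inseparable_coordinates)
  then obtain X A where X: "X \<notin> F" "X \<subseteq> {1..n}" "A \<in> F" "X \<subset> A \<or> A \<subset> X" "twin_wrt F X A"
    using exists_twin_outside[OF \<open>finite F\<close> induced_sat_nonempty[OF P2 sat] F(1)] by metis
  have "induced_copy P r (insert X F)" using X F(1) by (intro saturated) auto
  then show False using induced_copy_insert_twin[OF U X(1,3,4,5)] F(2) by blast
qed

theorem theorem1p9:
  fixes P :: "'a set" and r :: "'a rel" and n :: nat
  assumes "partial_order_on P r"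
    and "2 \<le> card P \<or> infinite P"
    and "UCTP P r"
    and "2 \<le> n"
  shows "\<lceil>log 2 (real n)\<rceil> \<le> int (isat n P r)"
proof -
  have "P \<noteq> {}" using assms(2) by auto
  then obtain F0 where "induced_sat n P r F0" by (rule induced_sat_exists)
  then have "\<exists>k F. induced_sat n P r F \<and> card F = k" by blast
  from LeastI_ex[OF this] obtain F where F: "induced_sat n P r F" "card F = isat n P r"
    unfolding isat_def by blast
  have "n \<le> 2 ^ isat n P r" using induced_sat_card_bound[OF assms(3,2) F(1)] F(2) by simp
  then have "real n \<le> 2 ^ isat n P r" by (metis of_nat_le_iff of_nat_numeral of_nat_power)
  then have "log 2 (real n) \<le> log 2 (2 ^ isat n P r)"
    using assms(4) by (subst log_le_cancel_iff) auto
  also have "\<dots> = real (isat n P r)" by (simp add: log_nat_power)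
  finally show ?thesis by (simp add: ceiling_le_iff)
qed

end
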